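(* The equations (F1) $\mathsf F=\neg\mathsf T$ and (F3) $\neg\neg x=x$ are derivable in equational logic from the set $\{\text{(F2)},\text{(F4)},\text{(F5)},\text{(F6)},\text{(F7)},\text{(F9)}\}$ (i.e. from $\mathrm{EqFSCL}^-\setminus\{\text{(F8)},\text{(F10)}\}$).
   Context: Let $A$ be a nonempty set of atoms. Terms are over the signature with constants $\mathsf T,\mathsf F$, atoms $a\in A$, unary $\neg$, binary $\land^\circ$ and $\lor^\circ$. The equations are: (F2) $x\lor^\circ y=\neg(\neg x\land^\circ\neg y)$; (F4) $\mathsf T\land^\circ x=x$; (F5) $x\lor^\circ\mathsf F=x$; (F6) $\mathsf F\land^\circ x=\mathsf F$; (F7) $(x\land^\circ y)\land^\circ z=x\land^\circ(y\land^\circ z)$; (F8) $\neg x\land^\circ\mathsf F=x\land^\circ\mathsf F$; (F9) $(x\land^\circ\mathsf F)\lor^\circ y=(x\lor^\circ\mathsf T)\land^\circ y$; (F10) $(x\land^\circ y)\lor^\circ(z\land^\circ\mathsf F)=(x\lor^\circ(z\land^\circ\mathsf F))\land^\circ(y\lor^\circ(z\land^\circ\mathsf F))$. $\mathrm{EqFSCL}^-$ is the set $\{\text{(F2)},\text{(F4)},\ldots,\text{(F10)}\}$. *)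

theory Defs
  imports Main
begin

datatype 'a fterm =
    TT
  | FF
  | Atom 'a
  | Var nat
  | Neg "'a fterm"
  | LAnd "'a fterm" "'a fterm"
  | LOr "'a fterm" "'a fterm"

primrec subst :: "(nat \<Rightarrow> 'a fterm) \<Rightarrow> 'a fterm \<Rightarrow> 'a fterm" where
  "subst \<sigma> TT = TT"
| "subst \<sigma> FF = FF"
| "subst \<sigma> (Atom a) = Atom a"
| "subst \<sigma> (Var n) = \<sigma> n"
| "subst \<sigma> (Neg t) = Neg (subst \<sigma> t)"
| "subst \<sigma> (LAnd t u) = LAnd (subst \<sigma> t) (subst \<sigma> u)"
| "subst \<sigma> (LOr t u) = LOr (subst \<sigma> t) (subst \<sigma> u)"

inductive derivable :: "('a fterm \<times> 'a fterm) set \<Rightarrow> 'a fterm \<Rightarrow> 'a fterm \<Rightarrow> bool"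
  for E where
  ax: "(l, r) \<in> E \<Longrightarrow> derivable E (subst \<sigma> l) (subst \<sigma> r)"
| refl: "derivable E t t"
| sym: "derivable E t u \<Longrightarrow> derivable E u t"
| trans: "derivable E t u \<Longrightarrow> derivable E u v \<Longrightarrow> derivable E t v"
| cong_neg: "derivable E t u \<Longrightarrow> derivable E (Neg t) (Neg u)"
| cong_and: "derivable E t1 u1 \<Longrightarrow> derivable E t2 u2 \<Longrightarrow> derivable E (LAnd t1 t2) (LAnd u1 u2)"
| cong_or: "derivable E t1 u1 \<Longrightarrow> derivable E t2 u2 \<Longrightarrow> derivable E (LOr t1 t2) (LOr u1 u2)"

abbreviation vx :: "'a fterm" where "vx \<equiv> Var 0"
abbreviation vy :: "'a fterm" where "vy \<equiv> Var 1"
abbreviation vz :: "'a fterm" where "vz \<equiv> Var 2"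

definition F2 :: "'a fterm \<times> 'a fterm" where
  "F2 = (LOr vx vy, Neg (LAnd (Neg vx) (Neg vy)))"
definition F4 :: "'a fterm \<times> 'a fterm" where
  "F4 = (LAnd TT vx, vx)"
definition F5 :: "'a fterm \<times> 'a fterm" where
  "F5 = (LOr vx FF, vx)"
definition F6 :: "'a fterm \<times> 'a fterm" where
  "F6 = (LAnd FF vx, FF)"
definition F7 :: "'a fterm \<times> 'a fterm" where
  "F7 = (LAnd (LAnd vx vy) vz, LAnd vx (LAnd vy vz))"
definition F8 :: "'a fterm \<times> 'a fterm" where
  "F8 = (LAnd (Neg vx) FF, LAnd vx FF)"
definition F9 :: "'a fterm \<times> 'a fterm" where
  "F9 = (LOr (LAnd vx FF) vy, LAnd (LOr vx TT) vy)"
definition F10 :: "'a fterm \<times> 'a fterm" where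
  "F10 = (LOr (LAnd vx vy) (LAnd vz FF),
          LAnd (LOr vx (LAnd vz FF)) (LOr vy (LAnd vz FF)))"

definition EqFSCL_minus :: "('a fterm \<times> 'a fterm) set" where
  "EqFSCL_minus = {F2, F4, F5, F6, F7, F8, F9, F10}"

end

theory Submission
  imports Defs
begin

text \<open>Since \<open>x \<or>\<degree> F = x\<close>, unfolding (F2) gives \<open>\<not>(\<not>x \<and>\<degree> \<not>F) = x\<close>; substituting
  \<open>\<not>(\<not>x \<and>\<degree> \<not>F)\<close> for \<open>x\<close> under one negation yields \<open>\<not>(x \<and>\<degree> \<not>F) = \<not>x \<and>\<degree> \<not>F\<close>.
  Together with (F4) and (F6) these two identities give \<open>\<not>\<not>F = F\<close> and \<open>\<not>F = T\<close>, hence (F1),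
  and \<open>\<not>\<not>x \<and>\<degree> T = x\<close>. Associativity (F7) then turns the latter into
  \<open>\<not>\<not>x \<and>\<degree> y = x \<and>\<degree> y\<close>, from which \<open>x \<and>\<degree> T = x\<close> and finally (F3) follow.\<close>

locale fscl_fragment =
  fixes E :: "('a fterm \<times> 'a fterm) set"
  assumes F2_in: "F2 \<in> E" and F4_in: "F4 \<in> E" and F5_in: "F5 \<in> E"
    and F6_in: "F6 \<in> E" and F7_in: "F7 \<in> E"
begin

abbreviation deq :: "'a fterm \<Rightarrow> 'a fterm \<Rightarrow> bool" (infix "\<doteq>" 50)
  where "t \<doteq> u \<equiv> derivable E t u"

lemmas [trans] = derivable.trans
lemmas deq_sym = derivable.sym
lemmas deq_refl = derivable.refl

lemma or_unfold: "LOr x y \<doteq> Neg (LAnd (Neg x) (Neg y))"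
  using derivable.ax[OF F2_in[unfolded F2_def], of "\<lambda>n. if n = 0 then x else y"] by simp

lemma T_conj: "LAnd TT x \<doteq> x"
  using derivable.ax[OF F4_in[unfolded F4_def], of "\<lambda>_. x"] by simp

lemma or_F: "LOr x FF \<doteq> x"
  using derivable.ax[OF F5_in[unfolded F5_def], of "\<lambda>_. x"] by simp

lemma F_conj: "LAnd FF x \<doteq> FF"
  using derivable.ax[OF F6_in[unfolded F6_def], of "\<lambda>_. x"] by simp

lemma conj_assoc: "LAnd (LAnd x y) z \<doteq> LAnd x (LAnd y z)"
  using derivable.ax[OF F7_in[unfolded F7_def],
      of "\<lambda>n. if n = 0 then x else if n = 1 then y else z"] by simp

lemma neg_conj_neg_negF: "Neg (LAnd (Neg x) (Neg FF)) \<doteq> x"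
proof -
  have "Neg (LAnd (Neg x) (Neg FF)) \<doteq> LOr x FF" by (rule deq_sym[OF or_unfold])
  also have "\<dots> \<doteq> x" by (rule or_F)
  finally show ?thesis .
qed

lemma neg_conj_negF: "Neg (LAnd x (Neg FF)) \<doteq> LAnd (Neg x) (Neg FF)"
proof -
  have "Neg (LAnd x (Neg FF)) \<doteq> Neg (LAnd (Neg (LAnd (Neg x) (Neg FF))) (Neg FF))"
    by (intro derivable.cong_neg derivable.cong_and deq_sym[OF neg_conj_neg_negF] deq_refl)
  also have "\<dots> \<doteq> LAnd (Neg x) (Neg FF)" by (rule neg_conj_neg_negF)
  finally show ?thesis .
qed

lemma negneg_conj_negF: "LAnd (Neg (Neg x)) (Neg FF) \<doteq> x"
proof -
  have "LAnd (Neg (Neg x)) (Neg FF) \<doteq> Neg (LAnd (Neg x) (Neg FF))"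
    by (rule deq_sym[OF neg_conj_negF])
  also have "\<dots> \<doteq> x" by (rule neg_conj_neg_negF)
  finally show ?thesis .
qed

lemma negneg_F: "Neg (Neg FF) \<doteq> FF"
proof -
  have "LAnd (Neg FF) (Neg FF) \<doteq> Neg (LAnd FF (Neg FF))"
    by (rule deq_sym[OF neg_conj_negF])
  also have "\<dots> \<doteq> Neg FF" by (intro derivable.cong_neg F_conj)
  finally have "Neg (LAnd (Neg FF) (Neg FF)) \<doteq> Neg (Neg FF)" by (rule derivable.cong_neg)
  then have "Neg (Neg FF) \<doteq> Neg (LAnd (Neg FF) (Neg FF))" by (rule deq_sym)
  also have "\<dots> \<doteq> LAnd (Neg (Neg FF)) (Neg FF)" by (rule neg_conj_negF)
  also have "\<dots> \<doteq> FF" by (rule negneg_conj_negF)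
  finally show ?thesis .
qed

lemma negF_eq_T: "Neg FF \<doteq> TT"
proof -
  have "LAnd (Neg TT) (Neg FF) \<doteq> Neg (LAnd TT (Neg FF))"
    by (rule deq_sym[OF neg_conj_negF])
  also have "\<dots> \<doteq> Neg (Neg FF)" by (intro derivable.cong_neg T_conj)
  also have "\<dots> \<doteq> FF" by (rule negneg_F)
  finally have "Neg (LAnd (Neg TT) (Neg FF)) \<doteq> Neg FF" by (rule derivable.cong_neg)
  then have "Neg FF \<doteq> Neg (LAnd (Neg TT) (Neg FF))" by (rule deq_sym)
  also have "\<dots> \<doteq> LAnd (Neg (Neg TT)) (Neg FF)" by (rule neg_conj_negF)
  also have "\<dots> \<doteq> TT" by (rule negneg_conj_negF)
  finally show ?thesis .
qed

lemma F_eq_negT: "FF \<doteq> Neg TT"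
proof -
  have "FF \<doteq> Neg (Neg FF)" by (rule deq_sym[OF negneg_F])
  also have "\<dots> \<doteq> Neg TT" by (intro derivable.cong_neg negF_eq_T)
  finally show ?thesis .
qed

lemma negneg_conj_T: "LAnd (Neg (Neg x)) TT \<doteq> x"
proof -
  have "LAnd (Neg (Neg x)) TT \<doteq> LAnd (Neg (Neg x)) (Neg FF)"
    by (intro derivable.cong_and deq_refl deq_sym[OF negF_eq_T])
  also have "\<dots> \<doteq> x" by (rule negneg_conj_negF)
  finally show ?thesis .
qed

lemma negneg_conj: "LAnd (Neg (Neg x)) y \<doteq> LAnd x y"
proof -
  have "LAnd (Neg (Neg x)) y \<doteq> LAnd (Neg (Neg x)) (LAnd TT y)"
    by (intro derivable.cong_and deq_refl deq_sym[OF T_conj])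
  also have "\<dots> \<doteq> LAnd (LAnd (Neg (Neg x)) TT) y" by (rule deq_sym[OF conj_assoc])
  also have "\<dots> \<doteq> LAnd x y" by (intro derivable.cong_and negneg_conj_T deq_refl)
  finally show ?thesis .
qed

lemma conj_T: "LAnd x TT \<doteq> x"
proof -
  have "LAnd x TT \<doteq> LAnd (Neg (Neg x)) TT" by (rule deq_sym[OF negneg_conj])
  also have "\<dots> \<doteq> x" by (rule negneg_conj_T)
  finally show ?thesis .
qed

lemma negneg: "Neg (Neg x) \<doteq> x"
proof -
  have "Neg (Neg x) \<doteq> LAnd (Neg (Neg x)) TT" by (rule deq_sym[OF conj_T])
  also have "\<dots> \<doteq> LAnd x TT" by (rule negneg_conj)
  also have "\<dots> \<doteq> x" by (rule conj_T)
  finally show ?thesis .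
qed

end

interpretation EqFSCL_fragment: fscl_fragment "EqFSCL_minus - {F8, F10}"
  by unfold_locales
    (simp_all add: EqFSCL_minus_def F2_def F4_def F5_def F6_def F7_def F8_def F10_def)

theorem proposition2p7:
  "derivable (EqFSCL_minus - {F8, F10}) FF (Neg TT)
   \<and> derivable (EqFSCL_minus - {F8, F10}) (Neg (Neg (Var 0))) (Var 0)"
  using EqFSCL_fragment.F_eq_negT EqFSCL_fragment.negneg by blast

end
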